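(* In the standing setup, let $S\in\mathfrak{S}$ be positively enabled and $T\in\mathfrak{S}$ negatively enabled, and let $A_S=\mathrm{eff}(\sigma^+_S)$, $B_T=-\mathrm{eff}(\sigma^-_T)$. Then $$\sum_{i\in\mathcal{N}_{(S,\cdot)}}\mathrm{len}(\rho^i_{\mathrm{cap}})\le A_S\cdot n,\qquad \sum_{i\in\mathcal{N}_{(\cdot,T)}}\mathrm{len}(\rho^i_{\mathrm{cap}})\le n\cdot B_T,$$ and moreover $\sum_{i\in\mathcal{N}}\mathrm{len}(\rho^i_{\mathrm{cap}})\le n^2$.
   Context: $\mathbb{N}=\{0,1,2,\dots\}$. A one-counter system (OCS) $\mathcal{O}$ consists of a finite set $Q$ of states, a set $T_{>0}\subseteq Q\times\{-1,0,1\}\times Q$ of non-zero transitions and a set $T_{=0}\subseteq Q\times\{0,1\}\times Q$ of zero tests. A configuration is a pair $(q,c)\in Q\times\mathbb{N}$ (state $q$, counter value $c$). A transition $t=(p,d,q)$ has source $p$, target $q$, effect $d$; it can be fired in $(p,c)$ if either $t\in T_{>0}$ and $c>0$, or $t\in T_{=0}$ and $c=0$, yielding $(q,c+d)$. A path is a sequence $(\gamma_1,t_1)\cdots(\gamma_m,t_m)$ such that, with some $\gamma_{m+1}$, firing $t_i$ in $\gamma_i$ yields $\gamma_{i+1}$ for all $i\le m$; its source is $\gamma_1$, target $\gamma_{m+1}$, length $\mathrm{len}=m$, configurations appearing on it are $\gamma_1,\dots,\gamma_{m+1}$, intermediate ones are $\gamma_2,\dots,\gamma_m$; its projection is $\mathrm{proj}=t_1\cdots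 t_m$ and its effect $\mathrm{eff}$ is the sum of the effects of its transitions. A sequence of transitions is consistent if each transition's target is the next one's source. A cycle is a consistent sequence of non-zero transitions starting and ending in the same state (its base state); positive/negative if its effect is positive/negative; simple if no state is visited twice except the base at start and end. The transition multigraph $G$ has vertices $Q$ and an edge $p\to q$ labelled $d$ for each $(p,d,q)\in T_{>0}$; $\mathfrak{S}$ is the set of its SCCs and $n_S$ the number of states in $S\in\mathfrak{S}$. A cycle is contained in $S$ if all its states lie in $S$; $S$ is positively (negatively) enabled if it contains a positive (negative) cycle. For every positively enabled $S$ a simple positive cycle $\sigma^+_S$ contained in $S$ is fixed, and for every negatively enabled $T$ a simple negative cycle $\sigma^-_T$ contained in $T$. An arc is a path whose source and target have counter value $0$ and whose intermediate configurations have positive counter value. A path is low if all configurations appearing on it have counter value $<5n$, where $n=|Q|$. For $S,T\in\mathfrak{S}$, an arc $\rho$ is $(S,T)$-normal if $\rho=\rho_{\mathrm{pref}}\rho_{\mathrm{up}}\rho_{\mathrm{cap}}\rho_{\mathrm{down}}\rho_{\mathrm{suff}}$ (normal decomposition) with $\rho_{\mathrm{pref}},\rho_{\mathrm{suff}}$ low, $\mathrm{proj}(\rho_{\mathrm{up}})=(\sigma^+_S)^a$, $\mathrm{proj}(\rho_{\mathrm{down}})=(\sigma^-_T)^b$ for some $a,b\in\mathbb{N}$, the source of $\rho_{\mathrm{cap}}$ having the base state of $\sigma^+_S$ and its target the base state of $\sigma^-_T$. Writing $A=\mathrm{eff}(\sigma^+_S)$, $B=-\mathrm{eff}(\sigma^-_T)$,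 such a decomposition is good if: (iii) $aA\le 2\,\mathrm{len}(\rho_{\mathrm{cap}})+2\,\mathrm{lcm}(A,B)$; (iv) $bB\le 2\,\mathrm{len}(\rho_{\mathrm{cap}})+2\,\mathrm{lcm}(A,B)$; (v) no infix of $\mathrm{proj}(\rho_{\mathrm{cap}})$ is a cycle with effect divisible by $\gcd(A,B)$; (vi) the target of $\rho_{\mathrm{up}}$ and the source of $\rho_{\mathrm{down}}$ have counter values $>n$; (vii) all configurations appearing on $\rho_{\mathrm{pref}}$ and $\rho_{\mathrm{suff}}$ together are pairwise distinct. Standing setup: $\alpha,\beta$ are configurations with counter value $0$; $\rho=\rho^1\rho^2\cdots\rho^k$ is a path from $\alpha$ to $\beta$ that has the minimum possible number of appearing configurations with counter value $0$ among all paths from $\alpha$ to $\beta$; each $\rho^i$ is an arc; $\{1,\dots,k\}=\mathcal{L}\sqcup\mathcal{N}$ where for $i\in\mathcal{L}$, $\rho^i$ is a low arc of minimum length among all low arcs with the same source and target, and for $i\in\mathcal{N}$, $\rho^i$ is $(S_i,T_i)$-normal for some $S_i,T_i\in\mathfrak{S}$ with a fixed good normal decomposition $\rho^i=\rho^i_{\mathrm{pref}}\rho^i_{\mathrm{up}}\rho^i_{\mathrm{cap}}\rho^i_{\mathrm{down}}\rho^i_{\mathrm{suff}}$. For $S,T\in\mathfrak{S}$: $\mathcal{N}_{(S,T)}=\{i\in\mathcal{N}: (S_i,T_i)=(S,T)\}$, $\mathcal{N}_{(S,\cdot)}=\{i\in\mathcal{N}:S_i=S\}$, $\mathcal{N}_{(\cdot,T)}=\{i\in\mathcal{N}:T_i=T\}$.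 *)

theory Defs
  imports Main
begin

type_synonym 'q trans = "'q \<times> int \<times> 'q"
type_synonym 'q conf = "'q \<times> nat"
text \<open>A path is given by its source configuration and its projection (list of
transitions); the configurations appearing on it are determined by these.\<close>
type_synonym 'q path = "'q conf \<times> 'q trans list"

definition tsrc :: "'q trans \<Rightarrow> 'q" where "tsrc t = fst t"
definition teff :: "'q trans \<Rightarrow> int" where "teff t = fst (snd t)"
definition ttgt :: "'q trans \<Rightarrow> 'q" where "ttgt t = snd (snd t)"

definition ocs :: "'q set \<Rightarrow> 'q trans set \<Rightarrow> 'q trans set \<Rightarrow> bool" where
  "ocs Q Tp Tz \<longleftrightarrow> finite Q \<and> Tp \<subseteq> Q \<times> {-1, 0, 1} \<times> Q \<and> Tz \<subseteq> Q \<times> {0, 1} \<times> Q"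

definition fireable :: "'q trans set \<Rightarrow> 'q trans set \<Rightarrow> 'q conf \<Rightarrow> 'q trans \<Rightarrow> bool" where
  "fireable Tp Tz \<gamma> t \<longleftrightarrow> tsrc t = fst \<gamma> \<and>
     ((t \<in> Tp \<and> snd \<gamma> > 0) \<or> (t \<in> Tz \<and> snd \<gamma> = 0))"

definition fire :: "'q conf \<Rightarrow> 'q trans \<Rightarrow> 'q conf" where
  "fire \<gamma> t = (ttgt t, nat (int (snd \<gamma>) + teff t))"

fun confs_from :: "'q conf \<Rightarrow> 'q trans list \<Rightarrow> 'q conf list" where
  "confs_from \<gamma> [] = [\<gamma>]"
| "confs_from \<gamma> (t # ts) = \<gamma> # confs_from (fire \<gamma> t) ts"

fun is_run :: "'q trans set \<Rightarrow> 'q trans set \<Rightarrow> 'q conf \<Rightarrow> 'q trans list \<Rightarrow> bool" where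
  "is_run Tp Tz \<gamma> [] = True"
| "is_run Tp Tz \<gamma> (t # ts) = (fireable Tp Tz \<gamma> t \<and> is_run Tp Tz (fire \<gamma> t) ts)"

definition is_path :: "'q trans set \<Rightarrow> 'q trans set \<Rightarrow> 'q path \<Rightarrow> bool" where
  "is_path Tp Tz \<rho> \<longleftrightarrow> is_run Tp Tz (fst \<rho>) (snd \<rho>)"

definition confs :: "'q path \<Rightarrow> 'q conf list" where
  "confs \<rho> = confs_from (fst \<rho>) (snd \<rho>)"

definition psrc :: "'q path \<Rightarrow> 'q conf" where "psrc \<rho> = fst \<rho>"
definition ptgt :: "'q path \<Rightarrow> 'q conf" where "ptgt \<rho> = last (confs \<rho>)"
definition plen :: "'q path \<Rightarrow> nat" where "plen \<rho> = length (snd \<rho>)"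
definition proj :: "'q path \<Rightarrow> 'q trans list" where "proj \<rho> = snd \<rho>"

definition inter_confs :: "'q path \<Rightarrow> 'q conf list" where
  "inter_confs \<rho> = butlast (tl (confs \<rho>))"

definition zeros :: "'q path \<Rightarrow> nat" where
  "zeros \<rho> = length (filter (\<lambda>\<gamma>. snd \<gamma> = 0) (confs \<rho>))"

definition decomp :: "'q path \<Rightarrow> 'q path list \<Rightarrow> bool" where
  "decomp \<rho> rs \<longleftrightarrow>
     (rs \<noteq> [] \<longrightarrow> psrc (hd rs) = psrc \<rho>) \<and>
     (\<forall>i. Suc i < length rs \<longrightarrow> ptgt (rs ! i) = psrc (rs ! Suc i)) \<and>
     proj \<rho> = concat (map proj rs)"

definition consistent :: "'q trans list \<Rightarrow> bool" where
  "consistent ts \<longleftrightarrow> (\<forall>i. Suc i < length ts \<longrightarrow> ttgt (ts ! i) = tsrc (ts ! Suc i))"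

definition is_cycle :: "'q trans set \<Rightarrow> 'q trans list \<Rightarrow> bool" where
  "is_cycle Tp ts \<longleftrightarrow> ts \<noteq> [] \<and> set ts \<subseteq> Tp \<and> consistent ts \<and> ttgt (last ts) = tsrc (hd ts)"

definition teff_list :: "'q trans list \<Rightarrow> int" where
  "teff_list ts = sum_list (map teff ts)"

definition base :: "'q trans list \<Rightarrow> 'q" where "base ts = tsrc (hd ts)"

definition simple_cycle :: "'q trans set \<Rightarrow> 'q trans list \<Rightarrow> bool" where
  "simple_cycle Tp ts \<longleftrightarrow> is_cycle Tp ts \<and> distinct (map tsrc ts)"

definition contained :: "'q trans list \<Rightarrow> 'q set \<Rightarrow> bool" where
  "contained ts S \<longleftrightarrow> set (map tsrc ts) \<union> set (map ttgt ts) \<subseteq> S"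

definition edges :: "'q trans set \<Rightarrow> ('q \<times> 'q) set" where
  "edges Tp = {(p, q). \<exists>d. (p, d, q) \<in> Tp}"

definition is_scc :: "'q set \<Rightarrow> 'q trans set \<Rightarrow> 'q set \<Rightarrow> bool" where
  "is_scc Q Tp S \<longleftrightarrow> (\<exists>p\<in>Q. S = {q \<in> Q. (p, q) \<in> (edges Tp)\<^sup>* \<and> (q, p) \<in> (edges Tp)\<^sup>*})"

definition pos_enabled :: "'q trans set \<Rightarrow> 'q set \<Rightarrow> bool" where
  "pos_enabled Tp S \<longleftrightarrow> (\<exists>ts. is_cycle Tp ts \<and> teff_list ts > 0 \<and> contained ts S)"

definition neg_enabled :: "'q trans set \<Rightarrow> 'q set \<Rightarrow> bool" where
  "neg_enabled Tp S \<longleftrightarrow> (\<exists>ts. is_cycle Tp ts \<and> teff_list ts < 0 \<and> contained ts S)"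

text \<open>the fixed cycles \<sigma>^+_S (sp S) and \<sigma>^-_T (sn T)\<close>
definition sigma_ok :: "'q set \<Rightarrow> 'q trans set \<Rightarrow> ('q set \<Rightarrow> 'q trans list) \<Rightarrow> ('q set \<Rightarrow> 'q trans list) \<Rightarrow> bool" where
  "sigma_ok Q Tp sp sn \<longleftrightarrow>
     (\<forall>S. is_scc Q Tp S \<and> pos_enabled Tp S \<longrightarrow>
          simple_cycle Tp (sp S) \<and> teff_list (sp S) > 0 \<and> contained (sp S) S) \<and>
     (\<forall>T. is_scc Q Tp T \<and> neg_enabled Tp T \<longrightarrow>
          simple_cycle Tp (sn T) \<and> teff_list (sn T) < 0 \<and> contained (sn T) T)"

definition is_arc :: "'q trans set \<Rightarrow> 'q trans set \<Rightarrow> 'q path \<Rightarrow> bool" where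
  "is_arc Tp Tz \<rho> \<longleftrightarrow> is_path Tp Tz \<rho> \<and> plen \<rho> \<ge> 1 \<and>
     snd (psrc \<rho>) = 0 \<and> snd (ptgt \<rho>) = 0 \<and> (\<forall>\<gamma>\<in>set (inter_confs \<rho>). snd \<gamma> > 0)"

definition is_low :: "nat \<Rightarrow> 'q path \<Rightarrow> bool" where
  "is_low n \<rho> \<longleftrightarrow> (\<forall>\<gamma>\<in>set (confs \<rho>). snd \<gamma> < 5 * n)"

type_synonym 'q ndec = "'q path \<times> 'q path \<times> 'q path \<times> 'q path \<times> 'q path"

definition cap_of :: "'q ndec \<Rightarrow> 'q path" where "cap_of d = fst (snd (snd d))"

definition normal_dec ::
  "'q set \<Rightarrow> 'q trans set \<Rightarrow> 'q trans set \<Rightarrow> ('q set \<Rightarrow> 'q trans list) \<Rightarrow> ('q set \<Rightarrow> 'q trans list)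
   \<Rightarrow> 'q path \<Rightarrow> 'q set \<Rightarrow> 'q set \<Rightarrow> 'q ndec \<Rightarrow> bool" where
  "normal_dec Q Tp Tz sp sn \<rho> S T d \<longleftrightarrow>
     (case d of (pf, up, cap, dn, sf) \<Rightarrow>
        is_scc Q Tp S \<and> is_scc Q Tp T \<and> pos_enabled Tp S \<and> neg_enabled Tp T \<and>
        is_arc Tp Tz \<rho> \<and> decomp \<rho> [pf, up, cap, dn, sf] \<and>
        is_path Tp Tz pf \<and> is_path Tp Tz up \<and> is_path Tp Tz cap \<and> is_path Tp Tz dn \<and> is_path Tp Tz sf \<and>
        is_low (card Q) pf \<and> is_low (card Q) sf \<and>
        (\<exists>a. proj up = concat (replicate a (sp S))) \<and>
        (\<exists>b. proj dn = concat (replicate b (sn T))) \<and>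
        fst (psrc cap) = base (sp S) \<and> fst (ptgt cap) = base (sn T))"

definition good_dec ::
  "'q set \<Rightarrow> 'q trans set \<Rightarrow> 'q trans set \<Rightarrow> ('q set \<Rightarrow> 'q trans list) \<Rightarrow> ('q set \<Rightarrow> 'q trans list)
   \<Rightarrow> 'q path \<Rightarrow> 'q set \<Rightarrow> 'q set \<Rightarrow> 'q ndec \<Rightarrow> bool" where
  "good_dec Q Tp Tz sp sn \<rho> S T d \<longleftrightarrow>
     normal_dec Q Tp Tz sp sn \<rho> S T d \<and>
     (case d of (pf, up, cap, dn, sf) \<Rightarrow>
       (let A = teff_list (sp S); B = - teff_list (sn T); n = card Q in
        (\<exists>a b. proj up = concat (replicate a (sp S)) \<and> proj dn = concat (replicate b (sn T)) \<and>
           int a * A \<le> 2 * int (plen cap) + 2 * lcm A B \<and>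
           int b * B \<le> 2 * int (plen cap) + 2 * lcm A B) \<and>
        (\<forall>xs ys zs. proj cap = xs @ ys @ zs \<and> is_cycle Tp ys \<longrightarrow> \<not> (gcd A B dvd teff_list ys)) \<and>
        snd (ptgt up) > n \<and> snd (psrc dn) > n \<and>
        distinct (confs pf @ confs sf)))"

end

theory Submission
  imports Defs "HOL-Library.Product_Lexorder"
begin

text \<open>Two configurations with the same state, one on the cap of a normal arc and one on the cap
  of a later one, cannot have counter values that differ by a multiple of \<open>A\<^sub>S\<close> (or of
  \<open>B\<^sub>T\<close>): pumping the first arc up with \<open>\<sigma>\<^sup>+\<^sub>S\<close> and the second down with
  \<open>\<sigma>\<^sup>-\<^sub>T\<close> until the counters agree would glue them into a single arc, and
  \<open>\<rho>\<close> would not have the least number of zeros. Two such configurations on the same cap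
  would delimit a cycle of effect divisible by \<open>gcd A B\<close>, which good decompositions exclude.
  Hence (state, counter mod \<open>A\<^sub>S\<close>) separates all positions on caps of arcs belonging to
  \<open>S\<close>, so their total length is at most \<open>n \<cdot> A\<^sub>S\<close>; likewise for \<open>T\<close>. Since
  \<open>A\<^sub>S \<le> |S|\<close> and the components are disjoint, summing over \<open>S\<close> gives \<open>n\<^sup>2\<close>.\<close>

lemma progressions_meet:
  fixes A B c c' :: int
  assumes "0 < A" "0 < B" "A dvd c' - c"
  obtains x y :: nat where "c + int x * A = c' + int y * B"
proof -
  obtain k where k: "c' - c = A * k"
    using assms(3) by (auto elim: dvdE)
  have "\<bar>k\<bar> \<le> \<bar>k\<bar> * B"
    using assms(2) by (simp add: mult_le_cancel_left1)
  then have x: "0 \<le> k + \<bar>k\<bar> * B"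
    by linarith
  have y: "0 \<le> \<bar>k\<bar> * A"
    using assms(1) by simp
  have "c + (k + \<bar>k\<bar> * B) * A = c' + (\<bar>k\<bar> * A) * B"
    using k by (simp add: algebra_simps)
  then show ?thesis
    using that[of "nat (k + \<bar>k\<bar> * B)" "nat (\<bar>k\<bar> * A)"] x y by simp
qed

definition last_conf :: "'q conf \<Rightarrow> 'q trans list \<Rightarrow> 'q conf" where
  "last_conf \<gamma> ts = last (confs_from \<gamma> ts)"

lemma confs_from_not_Nil [simp]: "confs_from \<gamma> ts \<noteq> []"
  by (cases ts) auto

lemma length_confs_from [simp]: "length (confs_from \<gamma> ts) = Suc (length ts)"
  by (induction ts arbitrary: \<gamma>) auto

lemma confs_from_nth_0 [simp]: "confs_from \<gamma> ts ! 0 = \<gamma>"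
  by (cases ts) auto

lemma confs_from_eq_Cons_tl: "confs_from \<gamma> ts = \<gamma> # tl (confs_from \<gamma> ts)"
  by (cases ts) auto

lemma last_conf_Nil [simp]: "last_conf \<gamma> [] = \<gamma>"
  by (simp add: last_conf_def)

lemma last_conf_Cons [simp]: "last_conf \<gamma> (t # ts) = last_conf (fire \<gamma> t) ts"
  by (simp add: last_conf_def)

lemma last_conf_conv_nth: "last_conf \<gamma> ts = confs_from \<gamma> ts ! length ts"
  by (simp add: last_conf_def last_conv_nth)

lemma confs_from_append:
  "confs_from \<gamma> (xs @ ys) = confs_from \<gamma> xs @ tl (confs_from (last_conf \<gamma> xs) ys)"
  by (induction xs arbitrary: \<gamma>) (auto simp: last_conf_def intro: confs_from_eq_Cons_tl)

lemma last_conf_append: "last_conf \<gamma> (xs @ ys) = last_conf (last_conf \<gamma> xs) ys"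
  by (induction xs arbitrary: \<gamma>) auto

lemma is_run_append:
  "is_run Tp Tz \<gamma> (xs @ ys) \<longleftrightarrow> is_run Tp Tz \<gamma> xs \<and> is_run Tp Tz (last_conf \<gamma> xs) ys"
  by (induction xs arbitrary: \<gamma>) auto

lemma confs_from_append_nth:
  "k \<le> length xs + length ys \<Longrightarrow> confs_from \<gamma> (xs @ ys) ! k =
     (if k \<le> length xs then confs_from \<gamma> xs ! k
      else confs_from (last_conf \<gamma> xs) ys ! (k - length xs))"
  by (induction xs arbitrary: \<gamma> k) (auto simp: nth_Cons split: nat.split)

lemma last_conf_take: "p \<le> length ts \<Longrightarrow> last_conf \<gamma> (take p ts) = confs_from \<gamma> ts ! p"
  by (induction ts arbitrary: \<gamma> p) (auto simp: nth_Cons split: nat.split)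

lemma confs_from_append3_pos:
  assumes "\<And>k. 0 < k \<Longrightarrow> k \<le> length U \<Longrightarrow> 0 < snd (confs_from \<gamma> U ! k)"
    and "\<And>k. k \<le> length M \<Longrightarrow> 0 < snd (confs_from (last_conf \<gamma> U) M ! k)"
    and "\<And>k. k < length V \<Longrightarrow> 0 < snd (confs_from (last_conf (last_conf \<gamma> U) M) V ! k)"
    and "0 < k" "k < length (U @ M @ V)"
  shows "0 < snd (confs_from \<gamma> (U @ M @ V) ! k)"
proof (cases "k \<le> length U")
  case True
  then show ?thesis
    using assms(1,4,5) by (simp add: confs_from_append_nth)
next
  case False
  then have "confs_from \<gamma> (U @ M @ V) ! k = confs_from (last_conf \<gamma> U) (M @ V) ! (k - length U)"
    using assms(5) by (simp add: confs_from_append_nth)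
  also have "\<dots> = (if k - length U \<le> length M then confs_from (last_conf \<gamma> U) M ! (k - length U)
      else confs_from (last_conf (last_conf \<gamma> U) M) V ! (k - length U - length M))"
    using assms(5) False by (simp add: confs_from_append_nth)
  finally show ?thesis
    using assms(2,3,5) False by auto
qed

lemma confs_from_drop_nth:
  assumes "p + k \<le> length ts"
  shows "confs_from (confs_from \<gamma> ts ! p) (drop p ts) ! k = confs_from \<gamma> ts ! (p + k)"
  using confs_from_append_nth[of "p + k" "take p ts" "drop p ts" \<gamma>] last_conf_take[of p ts \<gamma>] assms
  by (auto simp: last_conf_conv_nth)

text \<open>A run all of whose configurations have positive counter value; it fires only
  non-zero transitions and can therefore be shifted to any higher counter value.\<close>

fun pos_run :: "'q trans set \<Rightarrow> 'q conf \<Rightarrow> 'q trans list \<Rightarrow> 'q conf \<Rightarrow> bool" where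
  "pos_run Tp \<gamma> [] \<gamma>' \<longleftrightarrow> \<gamma>' = \<gamma> \<and> 0 < snd \<gamma>"
| "pos_run Tp \<gamma> (t # ts) \<gamma>' \<longleftrightarrow>
     0 < snd \<gamma> \<and> t \<in> Tp \<and> tsrc t = fst \<gamma> \<and> pos_run Tp (fire \<gamma> t) ts \<gamma>'"

lemma pos_run_append:
  "pos_run Tp \<gamma> (xs @ ys) \<gamma>'' \<longleftrightarrow> (\<exists>\<gamma>'. pos_run Tp \<gamma> xs \<gamma>' \<and> pos_run Tp \<gamma>' ys \<gamma>'')"
  by (induction xs arbitrary: \<gamma>) (auto elim: pos_run.elims)

lemma pos_run_src_pos: "pos_run Tp \<gamma> ts \<gamma>' \<Longrightarrow> 0 < snd \<gamma>"
  by (cases ts) simp_all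

lemma pos_run_last_conf: "pos_run Tp \<gamma> ts \<gamma>' \<Longrightarrow> last_conf \<gamma> ts = \<gamma>'"
  by (induction ts arbitrary: \<gamma>) auto

lemma pos_run_is_run: "pos_run Tp \<gamma> ts \<gamma>' \<Longrightarrow> is_run Tp Tz \<gamma> ts"
  by (induction ts arbitrary: \<gamma>) (auto simp: fireable_def)

lemma pos_run_confs_pos: "pos_run Tp \<gamma> ts \<gamma>' \<Longrightarrow> k \<le> length ts \<Longrightarrow> 0 < snd (confs_from \<gamma> ts ! k)"
  by (induction ts arbitrary: \<gamma> k) (auto simp: nth_Cons split: nat.split)

lemma pos_run_tgt_pos: "pos_run Tp \<gamma> ts \<gamma>' \<Longrightarrow> 0 < snd \<gamma>'"
  using pos_run_confs_pos[of Tp \<gamma> ts \<gamma>' "length ts"] pos_run_last_conf[of Tp \<gamma> ts \<gamma>']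
  by (simp add: last_conf_conv_nth)

lemma is_run_imp_pos_run:
  "is_run Tp Tz \<gamma> ts \<Longrightarrow> (\<And>k. k \<le> length ts \<Longrightarrow> 0 < snd (confs_from \<gamma> ts ! k))
     \<Longrightarrow> pos_run Tp \<gamma> ts (last_conf \<gamma> ts)"
proof (induction ts arbitrary: \<gamma>)
  case Nil
  then show ?case by fastforce
next
  case (Cons t ts)
  have "0 < snd \<gamma>"
    using Cons.prems(2)[of 0] by simp
  moreover have "pos_run Tp (fire \<gamma> t) ts (last_conf (fire \<gamma> t) ts)"
    using Cons.prems Cons.IH[of "fire \<gamma> t"] by fastforce
  ultimately show ?case
    using Cons.prems(1) by (auto simp: fireable_def)
qed

lemma pos_run_shift:
  "pos_run Tp \<gamma> ts \<gamma>' \<Longrightarrow> pos_run Tp (fst \<gamma>, snd \<gamma> + d) ts (fst \<gamma>', snd \<gamma>' + d)"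
proof (induction ts arbitrary: \<gamma>)
  case Nil
  then show ?case by auto
next
  case (Cons t ts)
  then have "0 < snd (fire \<gamma> t)"
    using pos_run_src_pos by fastforce
  then have "fire (fst \<gamma>, snd \<gamma> + d) t = (fst (fire \<gamma> t), snd (fire \<gamma> t) + d)"
    by (auto simp: fire_def)
  then show ?case
    using Cons by auto
qed

lemma pos_run_counter: "pos_run Tp \<gamma> ts \<gamma>' \<Longrightarrow> int (snd \<gamma>') = int (snd \<gamma>) + teff_list ts"
proof (induction ts arbitrary: \<gamma>)
  case Nil
  then show ?case by (simp add: teff_list_def)
next
  case (Cons t ts)
  then have "0 < snd (fire \<gamma> t)"
    using pos_run_src_pos by fastforce
  then have "int (snd (fire \<gamma> t)) = int (snd \<gamma>) + teff t"
    by (auto simp: fire_def)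
  then show ?case
    using Cons.prems Cons.IH[of "fire \<gamma> t"] by (simp add: teff_list_def)
qed

lemma consistent_Cons:
  "consistent (t # ts) \<longleftrightarrow> consistent ts \<and> (ts \<noteq> [] \<longrightarrow> ttgt t = tsrc (hd ts))"
  unfolding consistent_def
  by (auto simp: hd_conv_nth nth_Cons split: nat.split)

lemma pos_run_consistent:
  "pos_run Tp \<gamma> ts \<gamma>' \<Longrightarrow>
     set ts \<subseteq> Tp \<and> consistent ts \<and> (ts \<noteq> [] \<longrightarrow> tsrc (hd ts) = fst \<gamma> \<and> ttgt (last ts) = fst \<gamma>')"
proof (induction ts arbitrary: \<gamma>)
  case Nil
  then show ?case by (simp add: consistent_def)
next
  case (Cons t ts)
  moreover have "fst (fire \<gamma> t) = ttgt t"
    by (simp add: fire_def)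
  ultimately show ?case
    using Cons.IH[of "fire \<gamma> t"] by (auto simp: consistent_Cons)
qed

lemma pos_run_take:
  "pos_run Tp \<gamma> ts \<gamma>' \<Longrightarrow> p \<le> length ts \<Longrightarrow> pos_run Tp \<gamma> (take p ts) (confs_from \<gamma> ts ! p)"
  by (induction ts arbitrary: \<gamma> p) (auto simp: take_Cons nth_Cons split: nat.split)

lemma pos_run_drop:
  "pos_run Tp \<gamma> ts \<gamma>' \<Longrightarrow> p \<le> length ts \<Longrightarrow> pos_run Tp (confs_from \<gamma> ts ! p) (drop p ts) \<gamma>'"
  by (induction ts arbitrary: \<gamma> p) (auto simp: drop_Cons nth_Cons split: nat.split)

lemma pos_run_states:
  assumes "pos_run Tp \<gamma> ts \<gamma>'" "fst \<gamma> \<in> Q" "Tp \<subseteq> Q \<times> UNIV \<times> Q" "k \<le> length ts"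
  shows "fst (confs_from \<gamma> ts ! k) \<in> Q"
  using assms
proof (induction ts arbitrary: \<gamma> k)
  case Nil
  then show ?case by simp
next
  case (Cons t ts)
  then have "fst (fire \<gamma> t) \<in> Q"
    by (auto simp: fire_def ttgt_def)
  then show ?case
    using Cons by (auto simp: nth_Cons split: nat.split)
qed

lemma pos_run_of_consistent:
  assumes "set ts \<subseteq> Tp" "\<forall>t\<in>set ts. -1 \<le> teff t" "consistent ts" "ts \<noteq> [] \<Longrightarrow> tsrc (hd ts) = s"
    and "length ts < c"
  shows "pos_run Tp (s, c) ts (if ts = [] then s else ttgt (last ts), nat (int c + teff_list ts))"
  using assms
proof (induction ts arbitrary: s c)
  case Nil
  then show ?case by (simp add: teff_list_def)
next
  case (Cons t ts)
  have c': "length ts < nat (int c + teff t)"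
    using Cons.prems by auto
  have "pos_run Tp (ttgt t, nat (int c + teff t)) ts
          (if ts = [] then ttgt t else ttgt (last ts), nat (int (nat (int c + teff t)) + teff_list ts))"
    using Cons.IH[OF _ _ _ _ c'] Cons.prems by (auto simp: consistent_Cons)
  moreover have "int (nat (int c + teff t)) = int c + teff t"
    using c' by simp
  ultimately show ?case
    using Cons.prems by (auto simp: fire_def teff_list_def add.assoc)
qed

lemma pos_run_cycle_power:
  assumes cyc: "is_cycle Tp \<sigma>" and eff: "\<forall>t\<in>set \<sigma>. -1 \<le> teff t"
    and "length \<sigma> < c" "int (length \<sigma>) < int c + int x * teff_list \<sigma>"
  shows "pos_run Tp (base \<sigma>, c) (concat (replicate x \<sigma>)) (base \<sigma>, nat (int c + int x * teff_list \<sigma>))"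
  using assms(3,4)
proof (induction x arbitrary: c)
  case 0
  then show ?case by simp
next
  case (Suc x)
  let ?c' = "nat (int c + teff_list \<sigma>)"
  have "int (length \<sigma>) < int c + teff_list \<sigma>"
  proof (cases "0 \<le> teff_list \<sigma>")
    case True
    then show ?thesis using Suc.prems(1) by simp
  next
    case False
    then have "int (Suc x) * teff_list \<sigma> \<le> teff_list \<sigma>"
      using mult_nonpos_nonneg[of "teff_list \<sigma>" "int x"] by (simp add: algebra_simps)
    then show ?thesis using Suc.prems(2) by simp
  qed
  then have c': "length \<sigma> < ?c'"
    by simp
  have "pos_run Tp (base \<sigma>, c) \<sigma> (base \<sigma>, ?c')"
    using pos_run_of_consistent[of \<sigma> Tp "base \<sigma>" c] cyc eff Suc.prems
    by (auto simp: is_cycle_def base_def)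
  moreover have "pos_run Tp (base \<sigma>, ?c') (concat (replicate x \<sigma>)) (base \<sigma>, nat (int c + int (Suc x) * teff_list \<sigma>))"
  proof -
    have "int ?c' = int c + teff_list \<sigma>"
      using c' by simp
    then show ?thesis
      using Suc.IH[OF c'] Suc.prems(2) by (simp add: algebra_simps)
  qed
  ultimately show ?case
    by (auto simp: pos_run_append)
qed

lemma pos_run_infix_cycle:
  assumes run: "pos_run Tp \<gamma> C \<gamma>'" and pq: "p < q" "q \<le> length C"
    and same: "fst (confs_from \<gamma> C ! p) = fst (confs_from \<gamma> C ! q)"
  obtains xs ys zs where "C = xs @ ys @ zs" "is_cycle Tp ys"
    "teff_list ys = int (snd (confs_from \<gamma> C ! q)) - int (snd (confs_from \<gamma> C ! p))"
proof -
  let ?cp = "confs_from \<gamma> C ! p" and ?cq = "confs_from \<gamma> C ! q"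
  define ys where "ys = take (q - p) (drop p C)"
  have "pos_run Tp ?cp (drop p C) \<gamma>'"
    using pos_run_drop[OF run] pq by simp
  then have "pos_run Tp ?cp ys (confs_from ?cp (drop p C) ! (q - p))"
    using pos_run_take[of Tp ?cp "drop p C" \<gamma>' "q - p"] pq by (simp add: ys_def)
  moreover have "confs_from ?cp (drop p C) ! (q - p) = ?cq"
    using confs_from_drop_nth[of p "q - p" C \<gamma>] pq by simp
  ultimately have ys: "pos_run Tp ?cp ys ?cq"
    by simp
  have "ys \<noteq> []"
    using pq by (simp add: ys_def)
  then have "is_cycle Tp ys"
    using pos_run_consistent[OF ys] same by (simp add: is_cycle_def)
  moreover have "C = take p C @ ys @ drop (q - p) (drop p C)"
    unfolding ys_def by (metis append_take_drop_id)
  ultimately show ?thesis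
    using that pos_run_counter[OF ys] by simp
qed

lemma psrc_Pair [simp]: "psrc (\<gamma>, ts) = \<gamma>"
  and proj_Pair [simp]: "proj (\<gamma>, ts) = ts"
  and plen_Pair [simp]: "plen (\<gamma>, ts) = length ts"
  and confs_Pair [simp]: "confs (\<gamma>, ts) = confs_from \<gamma> ts"
  and ptgt_Pair [simp]: "ptgt (\<gamma>, ts) = last_conf \<gamma> ts"
  and is_path_Pair [simp]: "is_path Tp Tz (\<gamma>, ts) \<longleftrightarrow> is_run Tp Tz \<gamma> ts"
  by (simp_all add: psrc_def proj_def plen_def confs_def ptgt_def last_conf_def is_path_def)

lemma path_eq_Pair: "\<rho> = (psrc \<rho>, proj \<rho>)"
  by (simp add: psrc_def proj_def)

lemma ptgt_conv_last_conf: "ptgt \<rho> = last_conf (psrc \<rho>) (proj \<rho>)"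
  and confs_conv_confs_from: "confs \<rho> = confs_from (psrc \<rho>) (proj \<rho>)"
  and plen_conv_length: "plen \<rho> = length (proj \<rho>)"
  by (simp_all add: ptgt_def last_conf_def confs_def psrc_def proj_def plen_def)

lemma set_butlast_tl_conv_nth: "set (butlast (tl L)) = {L ! k | k. 0 < k \<and> k < length L - 1}"
proof (rule set_eqI, rule iffI)
  fix x
  assume "x \<in> set (butlast (tl L))"
  then obtain k where "k < length L - Suc (Suc 0)" "x = L ! Suc k"
    by (auto simp: in_set_conv_nth nth_butlast nth_tl)
  then show "x \<in> {L ! k | k. 0 < k \<and> k < length L - 1}"
    by force
next
  fix x
  assume "x \<in> {L ! k | k. 0 < k \<and> k < length L - 1}"
  then obtain k where "0 < k" "k < length L - 1" "x = L ! k"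
    by auto
  then show "x \<in> set (butlast (tl L))"
    by (auto simp: in_set_conv_nth nth_butlast nth_tl intro!: exI[of _ "k - 1"])
qed

lemma set_inter_confs: "set (inter_confs \<rho>) = {confs \<rho> ! k | k. 0 < k \<and> k < plen \<rho>}"
  unfolding inter_confs_def set_butlast_tl_conv_nth by (simp add: confs_def plen_def)

lemma is_arc_inner: "is_arc Tp Tz \<rho> \<Longrightarrow> 0 < k \<Longrightarrow> k < plen \<rho> \<Longrightarrow> 0 < snd (confs \<rho> ! k)"
  unfolding is_arc_def set_inter_confs by blast

lemma is_arc_intro:
  "is_path Tp Tz \<rho> \<Longrightarrow> 1 \<le> plen \<rho> \<Longrightarrow> snd (psrc \<rho>) = 0 \<Longrightarrow> snd (ptgt \<rho>) = 0
     \<Longrightarrow> (\<And>k. 0 < k \<Longrightarrow> k < plen \<rho> \<Longrightarrow> 0 < snd (confs \<rho> ! k)) \<Longrightarrow> is_arc Tp Tz \<rho>"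
  unfolding is_arc_def set_inter_confs by blast

lemma zeros_arc: "is_arc Tp Tz \<rho> \<Longrightarrow> zeros \<rho> = 2"
proof -
  assume arc: "is_arc Tp Tz \<rho>"
  let ?L = "confs \<rho>"
  have "2 \<le> length ?L"
    using arc by (simp add: is_arc_def confs_def plen_def)
  then have L: "?L = [hd ?L] @ inter_confs \<rho> @ [last ?L]"
    unfolding inter_confs_def by (cases ?L) (auto simp: append_butlast_last_id)
  have "snd (hd ?L) = 0" "snd (last ?L) = 0"
    using arc by (auto simp: is_arc_def confs_def psrc_def ptgt_def hd_conv_nth)
  moreover have "filter (\<lambda>\<gamma>. snd \<gamma> = 0) (inter_confs \<rho>) = []"
    using arc by (auto simp: is_arc_def filter_empty_conv)
  ultimately show ?thesis
    unfolding zeros_def by (subst L) simp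
qed

lemma arc_prefix_pos:
  assumes "is_arc Tp Tz (\<gamma>, U @ W)" "0 < snd (last_conf \<gamma> U)" "0 < k" "k \<le> length U"
  shows "0 < snd (confs_from \<gamma> U ! k)"
proof (cases "k = length U")
  case True
  then show ?thesis using assms(2) by (simp add: last_conf_conv_nth)
next
  case False
  then show ?thesis
    using is_arc_inner[OF assms(1), of k] assms(3,4) by (simp add: confs_from_append_nth)
qed

lemma arc_suffix_pos:
  assumes arc: "is_arc Tp Tz (\<gamma>, W @ V)" and pos: "0 < snd (last_conf \<gamma> W)" and k: "k < length V"
  shows "0 < snd (confs_from (last_conf \<gamma> W) V ! k)"
proof (cases "k = 0")
  case True
  then show ?thesis using pos by simp
next
  case False
  then show ?thesis
    using is_arc_inner[OF arc, of "length W + k"] k by (simp add: confs_from_append_nth)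
qed

lemma arc_infix_pos_run:
  assumes arc: "is_arc Tp Tz (\<gamma>, U @ C @ V)"
    and pos: "0 < snd (last_conf \<gamma> U)" "0 < snd (last_conf \<gamma> (U @ C))"
  shows "pos_run Tp (last_conf \<gamma> U) C (last_conf \<gamma> (U @ C))"
proof -
  have arc': "is_arc Tp Tz (\<gamma>, (U @ C) @ V)"
    using arc by simp
  have "is_run Tp Tz (last_conf \<gamma> U) C"
    using arc by (simp add: is_arc_def is_run_append)
  moreover have "0 < snd (confs_from (last_conf \<gamma> U) C ! k)" if k: "k \<le> length C" for k
  proof (cases "k = 0")
    case True
    then show ?thesis using pos(1) by simp
  next
    case False
    then show ?thesis
      using arc_prefix_pos[OF arc' pos(2), of "length U + k"] k by (simp add: confs_from_append_nth)
  qed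
  ultimately show ?thesis
    using is_run_imp_pos_run by (fastforce simp: last_conf_append)
qed

lemma arc_replace_infix:
  assumes arc1: "is_arc Tp Tz (\<gamma>, U @ W)" and arc2: "is_arc Tp Tz (\<delta>, W' @ V)"
    and run: "pos_run Tp (last_conf \<gamma> U) M (last_conf \<delta> W')"
  shows "is_arc Tp Tz (\<gamma>, U @ M @ V)" "last_conf \<gamma> (U @ M @ V) = last_conf \<delta> (W' @ V)"
proof -
  let ?\<gamma>' = "last_conf \<gamma> U" and ?\<delta>' = "last_conf \<delta> W'"
  have pos: "0 < snd ?\<gamma>'" "0 < snd ?\<delta>'"
    using pos_run_src_pos[OF run] pos_run_tgt_pos[OF run] .
  have lM: "last_conf ?\<gamma>' M = ?\<delta>'"
    using pos_run_last_conf[OF run] .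
  show tgt: "last_conf \<gamma> (U @ M @ V) = last_conf \<delta> (W' @ V)"
    by (simp add: last_conf_append lM)
  have "V \<noteq> []"
    using arc2 pos(2) by (auto simp: is_arc_def last_conf_append)
  show "is_arc Tp Tz (\<gamma>, U @ M @ V)"
  proof (rule is_arc_intro)
    show "is_path Tp Tz (\<gamma>, U @ M @ V)"
      using arc1 arc2 pos_run_is_run[OF run] lM by (simp add: is_arc_def is_run_append)
    show "1 \<le> plen (\<gamma>, U @ M @ V)"
      using \<open>V \<noteq> []\<close> by (simp add: Suc_le_eq)
    show "snd (psrc (\<gamma>, U @ M @ V)) = 0" "snd (ptgt (\<gamma>, U @ M @ V)) = 0"
      using arc1 arc2 tgt by (simp_all add: is_arc_def)
    show "0 < snd (confs (\<gamma>, U @ M @ V) ! k)" if "0 < k" "k < plen (\<gamma>, U @ M @ V)" for k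
      using confs_from_append3_pos[OF arc_prefix_pos[OF arc1 pos(1)] pos_run_confs_pos[OF run]]
        arc_suffix_pos[OF arc2 pos(2)] lM that by simp
  qed
qed

fun arc_chain :: "'q trans set \<Rightarrow> 'q trans set \<Rightarrow> 'q conf \<Rightarrow> 'q path list \<Rightarrow> bool" where
  "arc_chain Tp Tz \<gamma> [] \<longleftrightarrow> True"
| "arc_chain Tp Tz \<gamma> (r # rs) \<longleftrightarrow> is_arc Tp Tz r \<and> psrc r = \<gamma> \<and> arc_chain Tp Tz (ptgt r) rs"

fun chain_end :: "'q conf \<Rightarrow> 'q path list \<Rightarrow> 'q conf" where
  "chain_end \<gamma> [] = \<gamma>"
| "chain_end \<gamma> (r # rs) = chain_end (ptgt r) rs"

lemma chain_end_append: "chain_end \<gamma> (xs @ ys) = chain_end (chain_end \<gamma> xs) ys"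
  by (induction xs arbitrary: \<gamma>) auto

lemma arc_chain_append:
  "arc_chain Tp Tz \<gamma> (xs @ ys) \<longleftrightarrow> arc_chain Tp Tz \<gamma> xs \<and> arc_chain Tp Tz (chain_end \<gamma> xs) ys"
  by (induction xs arbitrary: \<gamma>) auto

lemma chain_end_last: "rs \<noteq> [] \<Longrightarrow> chain_end \<gamma> rs = ptgt (last rs)"
  by (induction rs arbitrary: \<gamma>) auto

lemma arc_chain_of_decomp:
  assumes "decomp \<rho> rs" "\<And>i. i < length rs \<Longrightarrow> is_arc Tp Tz (rs ! i)"
  shows "arc_chain Tp Tz (psrc \<rho>) rs"
proof -
  have "arc_chain Tp Tz \<gamma> rs"
    if "\<forall>i<length rs. is_arc Tp Tz (rs ! i)" "rs \<noteq> [] \<longrightarrow> psrc (hd rs) = \<gamma>"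
      "\<forall>i. Suc i < length rs \<longrightarrow> ptgt (rs ! i) = psrc (rs ! Suc i)" for \<gamma> rs
    using that
  proof (induction rs arbitrary: \<gamma>)
    case Nil
    then show ?case by simp
  next
    case (Cons r rs)
    have "arc_chain Tp Tz (ptgt r) rs"
      using Cons.prems by (intro Cons.IH) (auto simp: hd_conv_nth)
    then show ?case
      using Cons.prems(1)[rule_format, of 0] Cons.prems(2) by auto
  qed
  then show ?thesis
    using assms by (auto simp: decomp_def)
qed

lemma arc_chain_concat:
  assumes "arc_chain Tp Tz \<gamma> rs" "snd \<gamma> = 0"
  shows "is_run Tp Tz \<gamma> (concat (map proj rs)) \<and>
    last_conf \<gamma> (concat (map proj rs)) = chain_end \<gamma> rs \<and>
    zeros (\<gamma>, concat (map proj rs)) = Suc (length rs)"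
  using assms
proof (induction rs arbitrary: \<gamma>)
  case Nil
  then show ?case by (simp add: zeros_def)
next
  case (Cons r rs)
  then have r: "is_arc Tp Tz r" "psrc r = \<gamma>" "arc_chain Tp Tz (ptgt r) rs" "snd (ptgt r) = 0"
    by (auto simp: is_arc_def)
  then have r': "is_run Tp Tz \<gamma> (proj r)" "last_conf \<gamma> (proj r) = ptgt r"
      "length (filter (\<lambda>\<gamma>. snd \<gamma> = 0) (confs_from \<gamma> (proj r))) = 2"
    using zeros_arc[OF r(1)]
    by (simp_all add: is_arc_def is_path_def ptgt_def last_conf_def confs_def psrc_def proj_def zeros_def)
  let ?X = "confs_from (ptgt r) (concat (map proj rs))"
  have "length (filter (\<lambda>\<gamma>. snd \<gamma> = 0) ?X) = Suc (length (filter (\<lambda>\<gamma>. snd \<gamma> = 0) (tl ?X)))"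
    using r(4) by (subst confs_from_eq_Cons_tl) simp
  then show ?case
    using Cons.IH[OF r(3,4)]
    by (simp add: is_run_append last_conf_append r' zeros_def confs_from_append)
qed

lemma arc_chain_replace_slice:
  assumes chain: "arc_chain Tp Tz \<gamma> rs" and ij: "i \<le> j" "j < length rs"
    and m: "is_arc Tp Tz m" "psrc m = psrc (rs ! i)" "ptgt m = ptgt (rs ! j)"
  shows "arc_chain Tp Tz \<gamma> (take i rs @ m # drop (Suc j) rs)"
    "chain_end \<gamma> (take i rs @ m # drop (Suc j) rs) = chain_end \<gamma> rs"
proof -
  define mid where "mid = drop i (take (Suc j) rs)"
  have split: "rs = take i rs @ mid @ drop (Suc j) rs"
    unfolding mid_def using ij
    by (metis append.assoc append_take_drop_id le_SucI min.absorb1 take_take)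
  let ?g = "chain_end \<gamma> (take i rs)"
  have parts: "arc_chain Tp Tz \<gamma> (take i rs)" "arc_chain Tp Tz ?g mid"
      "arc_chain Tp Tz (chain_end ?g mid) (drop (Suc j) rs)"
    using chain split arc_chain_append by metis+
  have "mid \<noteq> []" "hd mid = rs ! i" "last mid = rs ! j"
    using ij by (simp_all add: mid_def hd_drop_conv_nth last_conv_nth)
  then have g: "psrc (rs ! i) = ?g" and e: "chain_end ?g mid = ptgt (rs ! j)"
    using parts(2) chain_end_last[of mid ?g] by (cases mid; simp)+
  show "arc_chain Tp Tz \<gamma> (take i rs @ m # drop (Suc j) rs)"
    using parts(1,3) m g e by (simp add: arc_chain_append)
  have "chain_end \<gamma> rs = chain_end (ptgt (rs ! j)) (drop (Suc j) rs)"
    using e by (subst split) (simp add: chain_end_append)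
  then show "chain_end \<gamma> (take i rs @ m # drop (Suc j) rs) = chain_end \<gamma> rs"
    using m(3) by (simp add: chain_end_append)
qed

lemma teff_list_le_length: "\<forall>t\<in>set \<sigma>. teff t \<le> 1 \<Longrightarrow> teff_list \<sigma> \<le> int (length \<sigma>)"
  by (induction \<sigma>) (auto simp: teff_list_def)

lemma simple_cycle_length_le_card:
  "simple_cycle Tp \<sigma> \<Longrightarrow> set (map tsrc \<sigma>) \<subseteq> X \<Longrightarrow> finite X \<Longrightarrow> length \<sigma> \<le> card X"
proof -
  assume "simple_cycle Tp \<sigma>" "set (map tsrc \<sigma>) \<subseteq> X" "finite X"
  then show ?thesis
    using card_mono[of X "set (map tsrc \<sigma>)"] distinct_card[of "map tsrc \<sigma>"]
    by (simp add: simple_cycle_def)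
qed

lemma scc_subset: "is_scc Q Tp S \<Longrightarrow> S \<subseteq> Q"
  by (auto simp: is_scc_def)

lemma scc_disjoint: "is_scc Q Tp S \<Longrightarrow> is_scc Q Tp S' \<Longrightarrow> x \<in> S \<Longrightarrow> x \<in> S' \<Longrightarrow> S = S'"
proof -
  assume "is_scc Q Tp S" "is_scc Q Tp S'" "x \<in> S" "x \<in> S'"
  then obtain p p' where "S = {q \<in> Q. (p, q) \<in> (edges Tp)\<^sup>* \<and> (q, p) \<in> (edges Tp)\<^sup>*}"
      "S' = {q \<in> Q. (p', q) \<in> (edges Tp)\<^sup>* \<and> (q, p') \<in> (edges Tp)\<^sup>*}"
      "x \<in> S" "x \<in> S'"
    by (auto simp: is_scc_def)
  then show ?thesis
    by (blast intro: rtrancl_trans)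
qed

lemma sum_card_sccs_le_card:
  assumes "finite Q" "\<And>S. S \<in> F \<Longrightarrow> is_scc Q Tp S"
  shows "(\<Sum>S\<in>F. card S) \<le> card Q"
proof -
  have "pairwise disjnt F"
  proof (rule pairwiseI)
    fix S S'
    assume "S \<in> F" "S' \<in> F" "S \<noteq> S'"
    then show "disjnt S S'"
      using assms(2) scc_disjoint[of Q Tp S S'] by (auto simp: disjnt_def)
  qed
  moreover have "\<And>S. S \<in> F \<Longrightarrow> finite S"
    using assms scc_subset[of Q Tp] finite_subset by blast
  ultimately have "(\<Sum>S\<in>F. card S) = card (\<Union>F)"
    by (rule card_Union_disjoint[symmetric])
  also have "\<dots> \<le> card Q"
    using assms scc_subset[of Q Tp] by (intro card_mono) auto
  finally show ?thesis .
qed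

lemma good_dec_sccs:
  "good_dec Q Tp Tz sp sn r S T d \<Longrightarrow>
     is_scc Q Tp S \<and> pos_enabled Tp S \<and> is_scc Q Tp T \<and> neg_enabled Tp T \<and> is_arc Tp Tz r"
  by (cases d) (simp add: good_dec_def normal_dec_def)

lemma good_dec_cap_no_cycle:
  "good_dec Q Tp Tz sp sn r S T d \<Longrightarrow> proj (cap_of d) = xs @ ys @ zs \<Longrightarrow> is_cycle Tp ys \<Longrightarrow>
     \<not> gcd (teff_list (sp S)) (- teff_list (sn T)) dvd teff_list ys"
  by (cases d) (auto simp: good_dec_def cap_of_def Let_def)

lemma good_dec_cap_split:
  assumes "good_dec Q Tp Tz sp sn r S T d"
  obtains U V where "proj r = U @ proj (cap_of d) @ V" "last_conf (psrc r) U = psrc (cap_of d)"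
    "card Q < snd (psrc (cap_of d))" "card Q < snd (ptgt (cap_of d))"
    "fst (psrc (cap_of d)) = base (sp S)" "fst (ptgt (cap_of d)) = base (sn T)"
proof -
  obtain pf up cap dn sf where d: "d = (pf, up, cap, dn, sf)"
    by (cases d) auto
  have dec: "decomp r [pf, up, cap, dn, sf]"
    and facts: "card Q < snd (ptgt up)" "card Q < snd (psrc dn)"
      "fst (psrc cap) = base (sp S)" "fst (ptgt cap) = base (sn T)"
    using assms by (auto simp: good_dec_def normal_dec_def d Let_def)
  have chain: "\<And>i. Suc i < 5 \<Longrightarrow> ptgt ([pf, up, cap, dn, sf] ! i) = psrc ([pf, up, cap, dn, sf] ! Suc i)"
    using dec by (simp add: decomp_def)
  have links: "ptgt pf = psrc up" "ptgt up = psrc cap" "ptgt cap = psrc dn"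
    using chain[of 0] chain[of 1] chain[of 2] by simp_all
  have "proj r = (proj pf @ proj up) @ proj cap @ (proj dn @ proj sf)"
    "last_conf (psrc r) (proj pf @ proj up) = psrc cap"
    using dec links by (auto simp: decomp_def last_conf_append ptgt_conv_last_conf)
  then show ?thesis
    using that[of "proj pf @ proj up" "proj dn @ proj sf"] facts links by (simp add: d cap_of_def)
qed

lemma good_dec_cap_pos_run:
  assumes "good_dec Q Tp Tz sp sn r S T d"
  shows "pos_run Tp (psrc (cap_of d)) (proj (cap_of d)) (ptgt (cap_of d))"
proof -
  obtain U V where split: "proj r = U @ proj (cap_of d) @ V" "last_conf (psrc r) U = psrc (cap_of d)"
    and pos: "card Q < snd (psrc (cap_of d))" "card Q < snd (ptgt (cap_of d))"
    using good_dec_cap_split[OF assms] by metis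
  have "is_arc Tp Tz (psrc r, U @ proj (cap_of d) @ V)"
    using good_dec_sccs[OF assms] split(1) path_eq_Pair[of r] by metis
  moreover have "last_conf (psrc r) (U @ proj (cap_of d)) = ptgt (cap_of d)"
    using split(2) by (simp add: last_conf_append ptgt_conv_last_conf)
  ultimately show ?thesis
    using arc_infix_pos_run[of Tp Tz "psrc r" U "proj (cap_of d)" V] split(2) pos by simp
qed

subsection \<open>Caps of a minimal decomposition\<close>

locale minimal_arc_decomposition =
  fixes Q :: "'q set" and Tp Tz :: "'q trans set"
    and sp sn :: "'q set \<Rightarrow> 'q trans list"
    and n :: nat and \<alpha> \<beta> :: "'q conf" and \<rho> :: "'q path" and rs :: "'q path list"
    and Nset :: "nat set" and Sf Tf :: "nat \<Rightarrow> 'q set" and dec :: "nat \<Rightarrow> 'q ndec"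
  assumes ocs: "ocs Q Tp Tz" and n_def: "n = card Q"
    and sig: "sigma_ok Q Tp sp sn"
    and alpha: "snd \<alpha> = 0"
    and rho: "psrc \<rho> = \<alpha>" "ptgt \<rho> = \<beta>"
    and rho_min: "\<And>\<rho>'. is_path Tp Tz \<rho>' \<Longrightarrow> psrc \<rho>' = \<alpha> \<Longrightarrow> ptgt \<rho>' = \<beta> \<Longrightarrow> zeros \<rho> \<le> zeros \<rho>'"
    and dec_rho: "decomp \<rho> rs"
    and arcs: "\<And>i. i < length rs \<Longrightarrow> is_arc Tp Tz (rs ! i)"
    and Nset: "Nset \<subseteq> {..<length rs}"
    and normal: "\<And>i. i \<in> Nset \<Longrightarrow> good_dec Q Tp Tz sp sn (rs ! i) (Sf i) (Tf i) (dec i)"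
begin

abbreviation cap :: "nat \<Rightarrow> 'q path" where
  "cap i \<equiv> cap_of (dec i)"

abbreviation A :: "nat \<Rightarrow> int" where
  "A i \<equiv> teff_list (sp (Sf i))"

abbreviation B :: "nat \<Rightarrow> int" where
  "B i \<equiv> - teff_list (sn (Tf i))"

lemma finite_Q: "finite Q"
  and trans_states: "Tp \<subseteq> Q \<times> UNIV \<times> Q"
  and teff_bounds: "t \<in> Tp \<Longrightarrow> -1 \<le> teff t \<and> teff t \<le> 1"
  using ocs by (auto simp: ocs_def teff_def)

lemma finite_Nset: "finite Nset"
  using Nset finite_subset by blast

lemma sigma_pos:
  "is_scc Q Tp S \<Longrightarrow> pos_enabled Tp S \<Longrightarrow>
     simple_cycle Tp (sp S) \<and> 0 < teff_list (sp S) \<and> contained (sp S) S"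
  using sig by (simp add: sigma_ok_def)

lemma sigma_neg:
  "is_scc Q Tp T \<Longrightarrow> neg_enabled Tp T \<Longrightarrow>
     simple_cycle Tp (sn T) \<and> teff_list (sn T) < 0 \<and> contained (sn T) T"
  using sig by (simp add: sigma_ok_def)

lemma simple_cycle_length_le: "simple_cycle Tp \<sigma> \<Longrightarrow> length \<sigma> \<le> n"
  using simple_cycle_length_le_card[of Tp \<sigma> Q] trans_states finite_Q n_def
  by (force simp: simple_cycle_def is_cycle_def tsrc_def)

lemma normal_sccs:
  "i \<in> Nset \<Longrightarrow> is_scc Q Tp (Sf i) \<and> pos_enabled Tp (Sf i) \<and> is_scc Q Tp (Tf i) \<and> neg_enabled Tp (Tf i)"
  using good_dec_sccs[OF normal] by blast

lemma normal_cycles: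
  assumes "i \<in> Nset"
  shows "is_cycle Tp (sp (Sf i))" "length (sp (Sf i)) \<le> n" "0 < A i"
    "is_cycle Tp (sn (Tf i))" "length (sn (Tf i)) \<le> n" "0 < B i"
  using sigma_pos[of "Sf i"] sigma_neg[of "Tf i"] normal_sccs[OF assms] simple_cycle_length_le
  by (auto simp: simple_cycle_def)

lemma cap_states:
  assumes "i \<in> Nset" "p \<le> plen (cap i)"
  shows "fst (confs (cap i) ! p) \<in> Q"
proof -
  have "sp (Sf i) \<noteq> []" "set (sp (Sf i)) \<subseteq> Tp"
    using normal_cycles(1)[OF assms(1)] by (auto simp: is_cycle_def)
  then have "base (sp (Sf i)) \<in> Q"
    using trans_states by (auto simp: base_def tsrc_def dest!: hd_in_set)
  then show ?thesis
    using good_dec_cap_split[OF normal[OF assms(1)]] good_dec_cap_pos_run[OF normal[OF assms(1)]]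
      pos_run_states[OF _ _ trans_states] assms(2)
    by (metis confs_conv_confs_from plen_conv_length)
qed

text \<open>Minimality of \<open>\<rho>\<close>: an arc from the source of one arc of the decomposition to the
  target of a later one would save zeros.\<close>

lemma no_arc_shortcut:
  assumes ij: "i < j" "j < length rs"
    and m: "is_arc Tp Tz m" "psrc m = psrc (rs ! i)" "ptgt m = ptgt (rs ! j)"
  shows False
proof -
  have chain: "arc_chain Tp Tz \<alpha> rs"
    using arc_chain_of_decomp[OF dec_rho arcs] rho(1) by simp
  have proj_rho: "proj \<rho> = concat (map proj rs)"
    using dec_rho by (simp add: decomp_def)
  define rs' where "rs' = take i rs @ m # drop (Suc j) rs"
  have chain': "arc_chain Tp Tz \<alpha> rs'" "chain_end \<alpha> rs' = chain_end \<alpha> rs"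
    using arc_chain_replace_slice[OF chain _ ij(2) m] ij(1) by (simp_all add: rs'_def)
  note facts = arc_chain_concat[OF chain alpha] and facts' = arc_chain_concat[OF chain'(1) alpha]
  define \<rho>' where "\<rho>' = (\<alpha>, concat (map proj rs'))"
  have "zeros \<rho> = Suc (length rs)"
    using facts rho(1) path_eq_Pair[of \<rho>] proj_rho by metis
  moreover have "is_path Tp Tz \<rho>'" "psrc \<rho>' = \<alpha>" "zeros \<rho>' = Suc (length rs')"
    using facts' by (simp_all add: \<rho>'_def)
  moreover have "ptgt \<rho>' = \<beta>"
    using facts facts' chain'(2) rho proj_rho by (simp add: \<rho>'_def ptgt_conv_last_conf)
  moreover have "length rs' < length rs"
    using ij by (simp add: rs'_def)
  ultimately show False
    using rho_min[of \<rho>'] by simp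
qed

lemma normal_arc_split:
  assumes "i \<in> Nset"
  obtains U V where "is_arc Tp Tz (psrc (rs ! i), U @ proj (cap i) @ V)"
    "last_conf (psrc (rs ! i)) U = psrc (cap i)"
    "ptgt (rs ! i) = last_conf (psrc (rs ! i)) (U @ proj (cap i) @ V)"
proof -
  obtain U V where "proj (rs ! i) = U @ proj (cap i) @ V" "last_conf (psrc (rs ! i)) U = psrc (cap i)"
    using good_dec_cap_split[OF normal[OF assms]] by metis
  moreover have "is_arc Tp Tz (rs ! i)"
    using arcs Nset assms by auto
  ultimately show ?thesis
    using that path_eq_Pair[of "rs ! i"] by (metis ptgt_Pair)
qed

lemma cap_pump_up:
  assumes i: "i \<in> Nset" and p: "p \<le> plen (cap i)"
  shows "pos_run Tp (psrc (cap i)) (concat (replicate x (sp (Sf i))) @ take p (proj (cap i)))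
    (fst (confs (cap i) ! p), snd (confs (cap i) ! p) + x * nat (A i))"
proof -
  let ?\<gamma> = "psrc (cap i)" and ?\<sigma> = "sp (Sf i)" and ?a = "nat (A i)"
  have \<gamma>: "n < snd ?\<gamma>" "?\<gamma> = (base ?\<sigma>, snd ?\<gamma>)"
    using good_dec_cap_split[OF normal[OF i]] n_def by (metis prod.collapse)+
  have a: "A i = int ?a" and "0 \<le> int x * A i"
    using normal_cycles(3)[OF i] by simp_all
  have "\<forall>t\<in>set ?\<sigma>. -1 \<le> teff t"
    using normal_cycles(1)[OF i] teff_bounds unfolding is_cycle_def by blast
  then have "pos_run Tp (base ?\<sigma>, snd ?\<gamma>) (concat (replicate x ?\<sigma>)) (base ?\<sigma>, nat (int (snd ?\<gamma>) + int x * A i))"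
    by (intro pos_run_cycle_power[OF normal_cycles(1)[OF i]])
      (use normal_cycles(2)[OF i] \<gamma>(1) \<open>0 \<le> int x * A i\<close> in auto)
  then have "pos_run Tp ?\<gamma> (concat (replicate x ?\<sigma>)) (fst ?\<gamma>, snd ?\<gamma> + x * ?a)"
    using \<gamma>(2) a by (metis fst_conv nat_int of_nat_add of_nat_mult)
  moreover have "pos_run Tp (fst ?\<gamma>, snd ?\<gamma> + x * ?a) (take p (proj (cap i)))
      (fst (confs (cap i) ! p), snd (confs (cap i) ! p) + x * ?a)"
    using pos_run_shift[OF pos_run_take[OF good_dec_cap_pos_run[OF normal[OF i]]], of p "x * ?a"] p
    by (simp add: plen_conv_length confs_conv_confs_from)
  ultimately show ?thesis
    by (auto simp: pos_run_append)
qed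

lemma cap_pump_down:
  assumes j: "j \<in> Nset" and q: "q \<le> plen (cap j)"
  shows "pos_run Tp (fst (confs (cap j) ! q), snd (confs (cap j) ! q) + y * nat (B j))
    (drop q (proj (cap j)) @ concat (replicate y (sn (Tf j)))) (ptgt (cap j))"
proof -
  let ?\<delta> = "ptgt (cap j)" and ?\<tau> = "sn (Tf j)" and ?b = "nat (B j)"
  have \<delta>: "n < snd ?\<delta>" "?\<delta> = (base ?\<tau>, snd ?\<delta>)"
    using good_dec_cap_split[OF normal[OF j]] n_def by (metis prod.collapse)+
  have b: "teff_list ?\<tau> = - int ?b"
    using normal_cycles(6)[OF j] by simp
  have "\<forall>t\<in>set ?\<tau>. -1 \<le> teff t"
    using normal_cycles(4)[OF j] teff_bounds unfolding is_cycle_def by blast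
  then have "pos_run Tp (base ?\<tau>, snd ?\<delta> + y * ?b) (concat (replicate y ?\<tau>)) (base ?\<tau>, snd ?\<delta>)"
    using pos_run_cycle_power[OF normal_cycles(4)[OF j], of "snd ?\<delta> + y * ?b" y]
      normal_cycles(5)[OF j] \<delta>(1) b by simp
  then have "pos_run Tp (fst ?\<delta>, snd ?\<delta> + y * ?b) (concat (replicate y ?\<tau>)) ?\<delta>"
    using \<delta>(2) by (metis fst_conv)
  moreover have "pos_run Tp (fst (confs (cap j) ! q), snd (confs (cap j) ! q) + y * ?b)
      (drop q (proj (cap j))) (fst ?\<delta>, snd ?\<delta> + y * ?b)"
    using pos_run_shift[OF pos_run_drop[OF good_dec_cap_pos_run[OF normal[OF j]]], of q "y * ?b"] q
    by (simp add: plen_conv_length confs_conv_confs_from)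
  ultimately show ?thesis
    by (auto simp: pos_run_append)
qed

lemma caps_not_joinable:
  assumes i: "i \<in> Nset" and j: "j \<in> Nset" and ij: "i < j"
    and p: "p \<le> plen (cap i)" and q: "q \<le> plen (cap j)"
    and same: "fst (confs (cap i) ! p) = fst (confs (cap j) ! q)"
    and meet: "int (snd (confs (cap i) ! p)) + int x * A i = int (snd (confs (cap j) ! q)) + int y * B j"
  shows False
proof -
  let ?M = "(concat (replicate x (sp (Sf i))) @ take p (proj (cap i))) @
    drop q (proj (cap j)) @ concat (replicate y (sn (Tf j)))"
  have "int (snd (confs (cap i) ! p) + x * nat (A i)) = int (snd (confs (cap j) ! q) + y * nat (B j))"
    using meet normal_cycles(3)[OF i] normal_cycles(6)[OF j] by simp
  then have "snd (confs (cap i) ! p) + x * nat (A i) = snd (confs (cap j) ! q) + y * nat (B j)"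
    by (simp only: of_nat_eq_iff)
  then have "pos_run Tp (psrc (cap i)) (concat (replicate x (sp (Sf i))) @ take p (proj (cap i)))
      (fst (confs (cap j) ! q), snd (confs (cap j) ! q) + y * nat (B j))"
    using cap_pump_up[OF i p, of x] same by simp
  then have run: "pos_run Tp (psrc (cap i)) ?M (ptgt (cap j))"
    using cap_pump_down[OF j q, of y] pos_run_append by blast
  obtain U V where arc1: "is_arc Tp Tz (psrc (rs ! i), U @ proj (cap i) @ V)"
      and U: "last_conf (psrc (rs ! i)) U = psrc (cap i)"
    using normal_arc_split[OF i] by metis
  obtain U' V' where arc2: "is_arc Tp Tz (psrc (rs ! j), (U' @ proj (cap j)) @ V')"
      and U': "last_conf (psrc (rs ! j)) U' = psrc (cap j)"
      and tgt: "ptgt (rs ! j) = last_conf (psrc (rs ! j)) ((U' @ proj (cap j)) @ V')"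
    using normal_arc_split[OF j] by (metis append_assoc)
  have "last_conf (psrc (rs ! j)) (U' @ proj (cap j)) = ptgt (cap j)"
    using U' by (simp add: last_conf_append ptgt_conv_last_conf)
  then have "pos_run Tp (last_conf (psrc (rs ! i)) U) ?M (last_conf (psrc (rs ! j)) (U' @ proj (cap j)))"
    using run U by simp
  note joined = arc_replace_infix[OF arc1 arc2 this]
  have "j < length rs"
    using Nset j by auto
  then show False
    using no_arc_shortcut[OF ij _ joined(1)] joined(2) tgt by simp
qed

lemma cap_no_repeat:
  assumes i: "i \<in> Nset" and pq: "p < q" "q \<le> plen (cap i)"
    and same: "fst (confs (cap i) ! p) = fst (confs (cap i) ! q)"
    and dvd: "gcd (A i) (B i) dvd int (snd (confs (cap i) ! q)) - int (snd (confs (cap i) ! p))"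
  shows False
proof -
  have run: "pos_run Tp (psrc (cap i)) (proj (cap i)) (ptgt (cap i))"
    using good_dec_cap_pos_run[OF normal[OF i]] .
  obtain xs ys zs where "proj (cap i) = xs @ ys @ zs" "is_cycle Tp ys"
      "teff_list ys = int (snd (confs (cap i) ! q)) - int (snd (confs (cap i) ! p))"
    using pos_run_infix_cycle[OF run pq(1)] pq(2) same
    unfolding confs_conv_confs_from plen_conv_length by blast
  then show False
    using good_dec_cap_no_cycle[OF normal[OF i], of xs ys zs] dvd by simp
qed

lemma cap_confs_separated:
  assumes i: "i \<in> Nset" and j: "j \<in> Nset" and less: "(i, p) < (j, q)"
    and p: "p \<le> plen (cap i)" and q: "q \<le> plen (cap j)"
    and same: "fst (confs (cap i) ! p) = fst (confs (cap j) ! q)"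
    and dvd: "A i dvd int (snd (confs (cap j) ! q)) - int (snd (confs (cap i) ! p)) \<or>
      B j dvd int (snd (confs (cap j) ! q)) - int (snd (confs (cap i) ! p))"
  shows False
proof -
  let ?cp = "int (snd (confs (cap i) ! p))" and ?cq = "int (snd (confs (cap j) ! q))"
  consider "i < j" | "i = j" "p < q"
    using less by (cases "i < j") auto
  then show False
  proof cases
    case 1
    obtain x y :: nat where "?cp + int x * A i = ?cq + int y * B j"
    proof (cases "A i dvd ?cq - ?cp")
      case True
      then show ?thesis
        using progressions_meet[of "A i" "B j" ?cq ?cp] normal_cycles(3)[OF i] normal_cycles(6)[OF j] that
        by blast
    next
      case False
      then have "B j dvd ?cp - ?cq"
        using dvd by (simp add: dvd_diff_commute)
      then obtain y x :: nat where "?cq + int y * B j = ?cp + int x * A i"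
        using progressions_meet[of "B j" "A i" ?cp ?cq] normal_cycles(3)[OF i] normal_cycles(6)[OF j]
        by blast
      then show ?thesis
        using that[of x y] by simp
    qed
    then show False
      using caps_not_joinable[OF i j 1 p q same] by blast
  next
    case 2
    then have "gcd (A i) (B i) dvd ?cq - ?cp"
      using dvd by (auto intro: dvd_trans[OF gcd_dvd1] dvd_trans[OF gcd_dvd2])
    then show False
      using cap_no_repeat[of i p q] i q same 2 by simp
  qed
qed

lemma cap_lengths_sum_le:
  assumes I: "I \<subseteq> Nset" and K: "0 < K" and KI: "(\<forall>i\<in>I. A i = K) \<or> (\<forall>i\<in>I. B i = K)"
  shows "(\<Sum>i\<in>I. plen (cap i)) \<le> n * nat K"
proof -
  define P where "P = Sigma I (\<lambda>i. {..plen (cap i)})"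
  define f where "f = (\<lambda>(i, p). (fst (confs (cap i) ! p), int (snd (confs (cap i) ! p)) mod K))"
  have "inj_on f P"
  proof (rule linorder_inj_onI')
    fix u v
    assume "u \<in> P" "v \<in> P" "u < v"
    then obtain i p j q where uv: "u = (i, p)" "v = (j, q)" "i \<in> I" "j \<in> I"
        "p \<le> plen (cap i)" "q \<le> plen (cap j)" "(i, p) < (j, q)"
      by (auto simp: P_def)
    show "f u \<noteq> f v"
    proof
      assume "f u = f v"
      then have "fst (confs (cap i) ! p) = fst (confs (cap j) ! q)"
          "int (snd (confs (cap j) ! q)) mod K = int (snd (confs (cap i) ! p)) mod K"
        using uv by (auto simp: f_def)
      then have "fst (confs (cap i) ! p) = fst (confs (cap j) ! q)"
          "K dvd int (snd (confs (cap j) ! q)) - int (snd (confs (cap i) ! p))"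
        by (simp_all add: mod_eq_dvd_iff)
      moreover have "A i = K \<or> B j = K"
        using KI uv(3,4) by blast
      ultimately show False
        using cap_confs_separated[OF _ _ uv(7) uv(5,6)] uv(3,4) I by blast
    qed
  qed
  moreover have "f ` P \<subseteq> Q \<times> {0..<K}"
    using cap_states I K by (auto simp: P_def f_def)
  ultimately have "card P \<le> card (Q \<times> {0..<K})"
    using finite_Q by (intro card_inj_on_le) auto
  also have "\<dots> = n * nat K"
    by (simp add: card_cartesian_product n_def)
  finally have "card P \<le> n * nat K" .
  moreover have "card P = (\<Sum>i\<in>I. Suc (plen (cap i)))"
    using finite_subset[OF I finite_Nset] by (simp add: P_def card_SigmaI)
  moreover have "(\<Sum>i\<in>I. plen (cap i)) \<le> (\<Sum>i\<in>I. Suc (plen (cap i)))"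
    by (rule sum_mono) simp
  ultimately show ?thesis
    by linarith
qed

lemma cap_lengths_pos_scc:
  assumes "is_scc Q Tp S" "pos_enabled Tp S"
  shows "int (\<Sum>i\<in>{i\<in>Nset. Sf i = S}. plen (cap i)) \<le> teff_list (sp S) * int n"
proof -
  have K: "0 < teff_list (sp S)"
    using sigma_pos[OF assms] by simp
  have "(\<Sum>i\<in>{i\<in>Nset. Sf i = S}. plen (cap i)) \<le> n * nat (teff_list (sp S))"
    by (rule cap_lengths_sum_le[OF _ K]) auto
  then have "int (\<Sum>i\<in>{i\<in>Nset. Sf i = S}. plen (cap i)) \<le> int n * int (nat (teff_list (sp S)))"
    unfolding of_nat_mult[symmetric] of_nat_le_iff .
  then show ?thesis
    using K by (simp add: mult.commute)
qed

lemma cap_lengths_neg_scc: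
  assumes "is_scc Q Tp T" "neg_enabled Tp T"
  shows "int (\<Sum>i\<in>{i\<in>Nset. Tf i = T}. plen (cap i)) \<le> int n * (- teff_list (sn T))"
proof -
  have K: "0 < - teff_list (sn T)"
    using sigma_neg[OF assms] by simp
  have "(\<Sum>i\<in>{i\<in>Nset. Tf i = T}. plen (cap i)) \<le> n * nat (- teff_list (sn T))"
    by (rule cap_lengths_sum_le[OF _ K]) auto
  then have "int (\<Sum>i\<in>{i\<in>Nset. Tf i = T}. plen (cap i)) \<le> int n * int (nat (- teff_list (sn T)))"
    unfolding of_nat_mult[symmetric] of_nat_le_iff .
  then show ?thesis
    using K by simp
qed

lemma sigma_pos_eff_le_card:
  assumes "is_scc Q Tp S" "pos_enabled Tp S"
  shows "teff_list (sp S) \<le> int (card S)"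
proof -
  have cyc: "simple_cycle Tp (sp S)" "contained (sp S) S"
    using sigma_pos[OF assms] by blast+
  have "length (sp S) \<le> card S"
    using simple_cycle_length_le_card[OF cyc(1) _ finite_subset[OF scc_subset[OF assms(1)] finite_Q]] cyc(2)
    by (simp add: contained_def)
  moreover have "teff_list (sp S) \<le> int (length (sp S))"
    using cyc(1) teff_bounds by (intro teff_list_le_length) (auto simp: simple_cycle_def is_cycle_def)
  ultimately show ?thesis
    by linarith
qed

lemma cap_lengths_total: "(\<Sum>i\<in>Nset. plen (cap i)) \<le> n\<^sup>2"
proof -
  define F where "F = Sf ` Nset"
  have F: "is_scc Q Tp S \<and> pos_enabled Tp S" if "S \<in> F" for S
    using normal_sccs that by (auto simp: F_def)
  have "int (\<Sum>i\<in>Nset. plen (cap i)) = (\<Sum>S\<in>F. int (\<Sum>i\<in>{i\<in>Nset. Sf i = S}. plen (cap i)))"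
    unfolding F_def sum.image_gen[OF finite_Nset, of "\<lambda>i. plen (cap i)" Sf] by simp
  also have "\<dots> \<le> (\<Sum>S\<in>F. int (card S) * int n)"
  proof (rule sum_mono)
    fix S
    assume "S \<in> F"
    then have "int (\<Sum>i\<in>{i\<in>Nset. Sf i = S}. plen (cap i)) \<le> teff_list (sp S) * int n"
      using cap_lengths_pos_scc F by blast
    also have "\<dots> \<le> int (card S) * int n"
      using sigma_pos_eff_le_card F[OF \<open>S \<in> F\<close>] by (simp add: mult_right_mono)
    finally show "int (\<Sum>i\<in>{i\<in>Nset. Sf i = S}. plen (cap i)) \<le> int (card S) * int n" .
  qed
  also have "\<dots> = int (\<Sum>S\<in>F. card S) * int n"
    by (simp add: sum_distrib_right)
  also have "\<dots> \<le> int n * int n"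
  proof -
    have "(\<Sum>S\<in>F. card S) \<le> n"
      using sum_card_sccs_le_card[OF finite_Q, of F Tp] F n_def by blast
    then show ?thesis
      by (intro mult_right_mono) (simp_all only: of_nat_le_iff of_nat_0_le_iff)
  qed
  finally have "int (\<Sum>i\<in>Nset. plen (cap i)) \<le> int (n * n)"
    unfolding of_nat_mult .
  then show ?thesis
    unfolding of_nat_le_iff power2_eq_square .
qed

end

theorem lemma6:
  fixes Q :: "'q set" and Tp Tz :: "'q trans set"
    and sp sn :: "'q set \<Rightarrow> 'q trans list"
    and n :: nat and \<alpha> \<beta> :: "'q conf" and \<rho> :: "'q path" and rs :: "'q path list"
    and Nset :: "nat set" and Sf Tf :: "nat \<Rightarrow> 'q set" and dec :: "nat \<Rightarrow> 'q ndec"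
  assumes ocs: "ocs Q Tp Tz" and n_def: "n = card Q"
    and sig: "sigma_ok Q Tp sp sn"
    and alpha: "fst \<alpha> \<in> Q" "snd \<alpha> = 0" and beta: "fst \<beta> \<in> Q" "snd \<beta> = 0"
    and rho: "is_path Tp Tz \<rho>" "psrc \<rho> = \<alpha>" "ptgt \<rho> = \<beta>"
    and rho_min: "\<And>\<rho>'. is_path Tp Tz \<rho>' \<Longrightarrow> psrc \<rho>' = \<alpha> \<Longrightarrow> ptgt \<rho>' = \<beta> \<Longrightarrow> zeros \<rho> \<le> zeros \<rho>'"
    and dec_rho: "decomp \<rho> rs"
    and arcs: "\<And>i. i < length rs \<Longrightarrow> is_arc Tp Tz (rs ! i)"
    and Nset: "Nset \<subseteq> {..<length rs}"
    and low: "\<And>i. i < length rs \<Longrightarrow> i \<notin> Nset \<Longrightarrow>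
         is_low n (rs ! i) \<and>
         (\<forall>\<rho>'. is_arc Tp Tz \<rho>' \<and> is_low n \<rho>' \<and> psrc \<rho>' = psrc (rs ! i) \<and> ptgt \<rho>' = ptgt (rs ! i)
               \<longrightarrow> plen (rs ! i) \<le> plen \<rho>')"
    and normal: "\<And>i. i \<in> Nset \<Longrightarrow> good_dec Q Tp Tz sp sn (rs ! i) (Sf i) (Tf i) (dec i)"
  shows "(\<forall>S. is_scc Q Tp S \<and> pos_enabled Tp S \<longrightarrow>
            int (\<Sum>i\<in>{i\<in>Nset. Sf i = S}. plen (cap_of (dec i))) \<le> teff_list (sp S) * int n)
       \<and> (\<forall>T. is_scc Q Tp T \<and> neg_enabled Tp T \<longrightarrow>
            int (\<Sum>i\<in>{i\<in>Nset. Tf i = T}. plen (cap_of (dec i))) \<le> int n * (- teff_list (sn T)))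
       \<and> (\<Sum>i\<in>Nset. plen (cap_of (dec i))) \<le> n ^ 2"
proof -
  interpret minimal_arc_decomposition Q Tp Tz sp sn n \<alpha> \<beta> \<rho> rs Nset Sf Tf dec
    using ocs n_def sig alpha(2) rho(2,3) rho_min dec_rho arcs Nset normal
    by unfold_locales
  show ?thesis
    using cap_lengths_pos_scc cap_lengths_neg_scc cap_lengths_total by blast
qed

end
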